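(* Let $\ell,d,\rho$ be integers with $1\le\ell\le m$, $1\le d\le\ell(q-1)$ and $0\le\rho\le|\mathbb{H}^{(\ell)}_{\le d-1}|$. Then $\mathsf{SH}^{(\ell)}(\mathcal{M}^{(\ell)}_{d-1}(\rho))\cap\mathbb{H}^{(\ell)}_d=\mathcal{L}^{(\ell)}_d(\rho')$ for some nonnegative integer $\rho'$. Moreover, if $\rho$ is positive, then so is $\rho'$.
   Context: $q$ is a prime power and $m$ a positive integer. For $0\le\ell\le m$, $\mathbb{H}^{(\ell)}=\{x_0^{a_0}\cdots x_{\ell-1}^{a_{\ell-1}}:0\le a_j\le q-1\}$; $\mathbb{H}^{(\ell)}_d$ and $\mathbb{H}^{(\ell)}_{\le d}$ are its elements of degree $d$, resp. degree $\le d$. For $\mathcal{T}\subseteq\mathbb{H}^{(\ell)}$, $\mathsf{SH}^{(\ell)}(\mathcal{T})=\{\mu\in\mathbb{H}^{(\ell)}:\nu\mid\mu\text{ for some }\nu\in\mathcal{T}\}$. Lexicographic order: $x_0^{b_0}\cdots\prec x_0^{a_0}\cdots$ iff at the first index where exponents differ $a_i>b_i$. $\mathcal{M}^{(\ell)}_{k}(\rho)$ is the set of the first $\rho$ elements of $\mathbb{H}^{(\ell)}_{\le k}$ in descending lexicographic order; $\mathcal{L}^{(\ell)}_d(\rho')$ is the set of the first $\rho'$ elements of $\mathbb{H}^{(\ell)}_d$ in descending lexicographic order. *)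

theory Defs
  imports "HOL-Computational_Algebra.Primes"
begin

text \<open>A monomial x_0^a_0 ... x_{l-1}^a_{l-1} is represented by its exponent list
  [a_0, ..., a_{l-1}] of length l.\<close>

definition Hmon :: "nat \<Rightarrow> nat \<Rightarrow> nat list set" where
  "Hmon l q = {a. length a = l \<and> (\<forall>i<l. a ! i \<le> q - 1)}"

definition mdeg :: "nat list \<Rightarrow> nat" where
  "mdeg a = sum_list a"

definition Hdeg :: "nat \<Rightarrow> nat \<Rightarrow> nat \<Rightarrow> nat list set" where
  "Hdeg l q d = {a \<in> Hmon l q. mdeg a = d}"

definition Hle :: "nat \<Rightarrow> nat \<Rightarrow> nat \<Rightarrow> nat list set" where
  "Hle l q d = {a \<in> Hmon l q. mdeg a \<le> d}"

definition mdvd :: "nat list \<Rightarrow> nat list \<Rightarrow> bool" where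
  "mdvd nu mu \<longleftrightarrow> length nu = length mu \<and> (\<forall>i<length mu. nu ! i \<le> mu ! i)"

definition SH :: "nat \<Rightarrow> nat \<Rightarrow> nat list set \<Rightarrow> nat list set" where
  "SH l q T = {mu \<in> Hmon l q. \<exists>nu\<in>T. mdvd nu mu}"

text \<open>lex_less b a means b \<prec> a: at the first index where the exponents differ, a_i > b_i.\<close>
definition lex_less :: "nat list \<Rightarrow> nat list \<Rightarrow> bool" where
  "lex_less b a \<longleftrightarrow> length b = length a \<and>
     (\<exists>i<length a. take i b = take i a \<and> b ! i < a ! i)"

text \<open>The first rho elements of S in descending lexicographic order: those elements
  with fewer than rho elements of S strictly above them.\<close>
definition first_lex :: "nat list set \<Rightarrow> nat \<Rightarrow> nat list set" where
  "first_lex S rho = {mu \<in> S. card {nu \<in> S. lex_less mu nu} < rho}"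

definition Mset :: "nat \<Rightarrow> nat \<Rightarrow> nat \<Rightarrow> nat \<Rightarrow> nat list set" where
  "Mset l q k rho = first_lex (Hle l q k) rho"

definition Lset :: "nat \<Rightarrow> nat \<Rightarrow> nat \<Rightarrow> nat \<Rightarrow> nat list set" where
  "Lset l q d rho = first_lex (Hdeg l q d) rho"

definition prime_power :: "nat \<Rightarrow> bool" where
  "prime_power q \<longleftrightarrow> (\<exists>p k. prime p \<and> k \<ge> 1 \<and> q = p ^ k)"

end

theory Submission
  imports Defs
begin

text \<open>Let S be the degree-d part of the shadow of the initial segment M. A lex upper set of
  \<open>H_d\<close> is the set of its first |S| elements, so it suffices that S is an upper set. If
  \<open>\<nu> \<in> M\<close> divides \<open>x \<prec> y\<close> with \<open>y \<in> H_d\<close>, lower the last nonzero exponent of y to get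
  \<open>\<nu>'\<close> of degree d - 1 dividing y. Divisibility gives \<open>\<nu> \<preceq> x \<prec> y\<close>, and since \<open>\<nu>\<close> has smaller
  degree than y this forces \<open>\<nu> \<preceq> \<nu>'\<close>, so \<open>\<nu>' \<in> M\<close> and \<open>y \<in> S\<close>. For positivity, the
  lex-largest element of \<open>H_{\<le>d-1}\<close> lies in M; it has degree d - 1 by maximality, and raising
  one of its exponents gives an element of S.\<close>

lemma lex_less_iff_lexordp: "lex_less b a \<longleftrightarrow> length b = length a \<and> ord_class.lexordp b a"
  by (auto simp: lex_less_def lexordp_conv_lexord lexord_take_index_conv)

lemma lex_less_irrefl: "\<not> lex_less a a"
  by (simp add: lex_less_iff_lexordp lexordp_irreflexive')

lemma lex_less_trans: "lex_less c b \<Longrightarrow> lex_less b a \<Longrightarrow> lex_less c a"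
  by (auto simp: lex_less_iff_lexordp intro: lexordp_trans)

lemma lex_less_linear: "length a = length b \<Longrightarrow> lex_less a b \<or> a = b \<or> lex_less b a"
  using lexordp_linear[of a b] by (auto simp: lex_less_iff_lexordp)

lemma list_all2_le_imp_lexordp_eq:
  fixes xs ys :: "'a::linorder list"
  assumes "list_all2 (\<le>) xs ys"
  shows "lexordp_eq xs ys"
  using assms by (induction rule: list_all2_induct) auto

lemma lexordp_eq_decrement_last_nonzero:
  fixes v p :: "nat list"
  assumes "length v = length p + Suc n"
    and "ord_class.lexordp v (p @ Suc c # replicate n 0)"
    and "sum_list v < sum_list (p @ Suc c # replicate n 0)"
  shows "lexordp_eq v (p @ c # replicate n 0)"
  using assms
proof (induction p arbitrary: v)
  case Nil
  then obtain x r where v: "v = x # r" "length r = n"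
    by (cases v) auto
  show ?case
  proof (cases "x < c")
    case False
    have "x + sum_list r \<le> c"
      using Nil.prems(3) v by (simp add: sum_list_replicate)
    with False have "x = c" "sum_list r = 0" by linarith+
    then have "r = replicate n 0"
      using v(2) replicate_length_same[of r 0] by simp
    then show ?thesis
      using v \<open>x = c\<close> by (simp add: lexordp_eq_refl)
  qed (simp add: v)
next
  case (Cons a p)
  obtain y w where v: "v = y # w"
    using Cons.prems(1) by (cases v) auto
  show ?case
    using Cons.prems Cons.IH[of w] by (auto simp: v)
qed

lemma ex_lex_greatest:
  assumes "finite S" "S \<noteq> {}"
  shows "\<exists>x\<in>S. \<forall>y\<in>S. \<not> lex_less x y"
  using assms
proof (induction rule: finite_ne_induct)
  case (singleton x)
  then show ?case by (simp add: lex_less_irrefl)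
next
  case (insert x F)
  then obtain m where m: "m \<in> F" "\<forall>y\<in>F. \<not> lex_less m y" by blast
  show ?case
  proof (cases "lex_less m x")
    case True
    then have "\<forall>y\<in>insert x F. \<not> lex_less x y"
      using m lex_less_trans lex_less_irrefl by blast
    then show ?thesis by blast
  next
    case False
    then show ?thesis using m by blast
  qed
qed

lemma lex_greatest_in_first_lex:
  assumes "x \<in> S" "\<forall>y\<in>S. \<not> lex_less x y" "0 < r"
  shows "x \<in> first_lex S r"
proof -
  have "{y \<in> S. lex_less x y} = {}" using assms(2) by blast
  then show ?thesis
    using assms(1,3) unfolding first_lex_def by (simp only: mem_Collect_eq card.empty)
qed

lemma first_lex_upward_closed:
  assumes "finite S" "x \<in> first_lex S r" "y \<in> S" "lex_less x y"
  shows "y \<in> first_lex S r"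
proof -
  have "{z \<in> S. lex_less y z} \<subseteq> {z \<in> S. lex_less x z}"
    using assms(4) lex_less_trans by blast
  then have "card {z \<in> S. lex_less y z} \<le> card {z \<in> S. lex_less x z}"
    using assms(1) by (intro card_mono) auto
  then show ?thesis using assms(2,3) by (auto simp: first_lex_def)
qed

lemma upward_closed_eq_first_lex:
  assumes "finite H" "S \<subseteq> H" "\<And>a. a \<in> H \<Longrightarrow> length a = n"
    and up: "\<And>x y. x \<in> S \<Longrightarrow> y \<in> H \<Longrightarrow> lex_less x y \<Longrightarrow> y \<in> S"
  shows "S = first_lex H (card S)"
proof
  have "finite S" using assms(1,2) finite_subset by blast
  show "S \<subseteq> first_lex H (card S)"
  proof
    fix x assume x: "x \<in> S"
    have "{z \<in> H. lex_less x z} \<subseteq> S - {x}"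
      using up x lex_less_irrefl by blast
    then have "card {z \<in> H. lex_less x z} \<le> card (S - {x})"
      using \<open>finite S\<close> by (intro card_mono) auto
    also have "\<dots> < card S"
      using \<open>finite S\<close> x by (rule card_Diff1_less)
    finally show "x \<in> first_lex H (card S)"
      using x assms(2) by (auto simp: first_lex_def)
  qed
  show "first_lex H (card S) \<subseteq> S"
  proof
    fix x assume x: "x \<in> first_lex H (card S)"
    then have "x \<in> H" by (simp add: first_lex_def)
    show "x \<in> S"
    proof (rule ccontr)
      assume "x \<notin> S"
      have "S \<subseteq> {z \<in> H. lex_less x z}"
      proof
        fix s assume "s \<in> S"
        then have "lex_less x s \<or> lex_less s x"
          using lex_less_linear[of x s] \<open>x \<in> H\<close> \<open>x \<notin> S\<close> assms(2,3) by auto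
        then show "s \<in> {z \<in> H. lex_less x z}"
          using up \<open>s \<in> S\<close> \<open>x \<in> H\<close> \<open>x \<notin> S\<close> assms(2) by blast
      qed
      then have "card S \<le> card {z \<in> H. lex_less x z}"
        using assms(1) by (intro card_mono) auto
      then show False using x by (simp add: first_lex_def)
    qed
  qed
qed

lemma Hmon_iff: "a \<in> Hmon l q \<longleftrightarrow> length a = l \<and> (\<forall>x\<in>set a. x \<le> q - 1)"
  by (auto simp: Hmon_def all_set_conv_all_nth)

lemma finite_Hmon: "finite (Hmon l q)"
proof -
  have "Hmon l q \<subseteq> {xs. set xs \<subseteq> {..q - 1} \<and> length xs = l}"
    by (auto simp: Hmon_iff)
  then show ?thesis
    using finite_lists_length_eq[of "{..q - 1}" l] finite_subset by blast
qed

lemma mdvd_iff_list_all2: "mdvd nu mu \<longleftrightarrow> list_all2 (\<le>) nu mu"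
  by (auto simp: mdvd_def list_all2_conv_all_nth)

lemma mdvd_imp_lex_le: "mdvd nu mu \<Longrightarrow> nu = mu \<or> lex_less nu mu"
  by (metis list_all2_le_imp_lexordp_eq lexordp_eq_conv_lexord lex_less_iff_lexordp
      list_all2_lengthD mdvd_iff_list_all2)

lemma sum_list_nonzero_split_last:
  fixes a :: "nat list"
  assumes "sum_list a \<noteq> 0"
  obtains p c n where "a = p @ Suc c # replicate n 0"
  using assms
proof (induction a arbitrary: thesis rule: rev_induct)
  case Nil
  then show ?case by simp
next
  case (snoc x xs)
  show ?case
  proof (cases x)
    case 0
    then obtain p c n where "xs = p @ Suc c # replicate n 0"
      using snoc.IH snoc.prems(2) by auto
    then show ?thesis
      using snoc.prems(1)[of p c "Suc n"] 0 by (simp add: replicate_append_same[symmetric])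
  next
    case (Suc c)
    then show ?thesis using snoc.prems(1)[of xs c 0] by simp
  qed
qed

lemma Hmon_raise_exponent:
  assumes "a \<in> Hmon l q" "mdeg a < l * (q - 1)"
  obtains b where "b \<in> Hmon l q" "mdeg b = Suc (mdeg a)" "mdvd a b" "lex_less a b"
proof -
  have "\<exists>x\<in>set a. x < q - 1"
  proof (rule ccontr)
    assume "\<not> (\<exists>x\<in>set a. x < q - 1)"
    then have "a = replicate l (q - 1)"
      using assms(1) replicate_length_same[of a "q - 1"] by (force simp: Hmon_iff)
    then show False using assms(2) by (simp add: mdeg_def sum_list_replicate)
  qed
  then obtain p x r where a: "a = p @ x # r" and "x < q - 1"
    by (metis split_list)
  show thesis
  proof
    show "p @ Suc x # r \<in> Hmon l q"
      using assms(1) \<open>x < q - 1\<close> by (auto simp: Hmon_iff a)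
    show "mdeg (p @ Suc x # r) = Suc (mdeg a)"
      by (simp add: mdeg_def a)
    show "mdvd a (p @ Suc x # r)"
      by (simp add: a mdvd_iff_list_all2 list_all2_appendI list_all2_refl)
    show "lex_less a (p @ Suc x # r)"
      by (simp add: a lex_less_iff_lexordp lexordp_append_left_rightI)
  qed
qed

lemma SH_Mset_upward_closed:
  assumes "0 < d"
    and x: "x \<in> SH l q (Mset l q (d - 1) rho)" "x \<in> Hdeg l q d"
    and y: "y \<in> Hdeg l q d" "lex_less x y"
  shows "y \<in> SH l q (Mset l q (d - 1) rho)"
proof -
  obtain nu where nu: "nu \<in> Mset l q (d - 1) rho" "mdvd nu x"
    using x(1) by (auto simp: SH_def)
  have nu_low: "nu \<in> Hle l q (d - 1)"
    using nu(1) by (simp add: Mset_def first_lex_def)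
  have "lex_less nu y"
    using mdvd_imp_lex_le[OF nu(2)] y(2) lex_less_trans by blast
  then have len: "length nu = length y" and "ord_class.lexordp nu y"
    by (simp_all add: lex_less_iff_lexordp)
  have deg_y: "mdeg y = d" and y_mon: "y \<in> Hmon l q"
    using y(1) by (simp_all add: Hdeg_def)
  have "sum_list y \<noteq> 0"
    using deg_y assms(1) by (simp add: mdeg_def)
  then obtain p c n where y_split: "y = p @ Suc c # replicate n 0"
    by (rule sum_list_nonzero_split_last)
  define nu' where "nu' = p @ c # replicate n 0"
  have "mdeg nu < mdeg y"
    using nu_low deg_y assms(1) by (auto simp: Hle_def)
  then have "lexordp_eq nu nu'"
    unfolding nu'_def
    using lexordp_eq_decrement_last_nonzero \<open>ord_class.lexordp nu y\<close> len
    by (simp add: y_split mdeg_def)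
  then have "nu' = nu \<or> lex_less nu nu'"
    using len by (auto simp: lexordp_eq_conv_lexord lex_less_iff_lexordp nu'_def y_split)
  moreover have "nu' \<in> Hle l q (d - 1)"
    using y_mon deg_y by (auto simp: Hle_def Hmon_iff mdeg_def nu'_def y_split)
  ultimately have "nu' \<in> Mset l q (d - 1) rho"
    using nu(1) first_lex_upward_closed[of "Hle l q (d - 1)" nu rho nu'] finite_Hmon
    by (auto simp: Mset_def Hle_def)
  moreover have "mdvd nu' y"
    by (simp add: nu'_def y_split mdvd_iff_list_all2 list_all2_appendI list_all2_refl)
  ultimately show ?thesis
    using y_mon by (auto simp: SH_def)
qed

lemma SH_Mset_Hdeg_nonempty:
  assumes "0 < rho" "0 < d" "d \<le> l * (q - 1)"
  shows "SH l q (Mset l q (d - 1) rho) \<inter> Hdeg l q d \<noteq> {}"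
proof -
  let ?A = "Hle l q (d - 1)"
  have "replicate l 0 \<in> ?A"
    by (simp add: Hle_def Hmon_iff mdeg_def sum_list_replicate)
  moreover have "finite ?A"
    using finite_Hmon by (simp add: Hle_def)
  ultimately obtain x where x: "x \<in> ?A" and x_top: "\<forall>y\<in>?A. \<not> lex_less x y"
    using ex_lex_greatest by blast
  then have x_M: "x \<in> Mset l q (d - 1) rho"
    using lex_greatest_in_first_lex assms(1) by (simp add: Mset_def)
  have x_mon: "x \<in> Hmon l q" and "mdeg x \<le> d - 1"
    using x by (simp_all add: Hle_def)
  have "mdeg x < l * (q - 1)"
    using \<open>mdeg x \<le> d - 1\<close> assms(2,3) by linarith
  then obtain b where b: "b \<in> Hmon l q" "mdeg b = Suc (mdeg x)" "mdvd x b" "lex_less x b"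
    using Hmon_raise_exponent x_mon by blast
  have "mdeg x = d - 1"
  proof (rule ccontr)
    assume "mdeg x \<noteq> d - 1"
    then have "b \<in> ?A"
      using b(1,2) \<open>mdeg x \<le> d - 1\<close> by (simp add: Hle_def)
    then show False using x_top b(4) by blast
  qed
  then have "b \<in> SH l q (Mset l q (d - 1) rho) \<inter> Hdeg l q d"
    using b x_M assms(2) by (auto simp: SH_def Hdeg_def)
  then show ?thesis by blast
qed

theorem corollary3p3:
  fixes q m l d rho :: nat
  assumes "prime_power q" and "m \<ge> 1"
    and "1 \<le> l" and "l \<le> m"
    and "1 \<le> d" and "d \<le> l * (q - 1)"
    and "rho \<le> card (Hle l q (d - 1))"
  shows "\<exists>rho' :: nat. SH l q (Mset l q (d - 1) rho) \<inter> Hdeg l q d = Lset l q d rho'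
           \<and> (rho > 0 \<longrightarrow> rho' > 0)"
proof -
  define S where "S = SH l q (Mset l q (d - 1) rho) \<inter> Hdeg l q d"
  have fin: "finite (Hdeg l q d)"
    using finite_Hmon by (simp add: Hdeg_def)
  have "S = Lset l q d (card S)"
    unfolding Lset_def
  proof (rule upward_closed_eq_first_lex[OF fin])
    show "S \<subseteq> Hdeg l q d" by (simp add: S_def)
    show "\<And>a. a \<in> Hdeg l q d \<Longrightarrow> length a = l"
      by (simp add: Hdeg_def Hmon_def)
    show "\<And>x y. x \<in> S \<Longrightarrow> y \<in> Hdeg l q d \<Longrightarrow> lex_less x y \<Longrightarrow> y \<in> S"
      using SH_Mset_upward_closed[of d] assms(5) by (auto simp: S_def)
  qed
  moreover have "0 < rho \<longrightarrow> 0 < card S"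
    using SH_Mset_Hdeg_nonempty assms(5,6) fin by (simp add: S_def card_gt_0_iff)
  ultimately show ?thesis
    unfolding S_def by blast
qed

end
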